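(* Let $\sigma$ be the substitution $a\mapsto abab$, $b\mapsto b$ with fixed point $\mathbf{z}=\sigma^\omega(a)$, and $Z$ the orbit closure of $\mathbf{z}$. Define $p_1=a$ and $p_{k+1}=p_kb^kp_k$, so $\mathbf{z}=\lim_k p_k$. Then for every $k\ge1$, a word of the form $uab^k$ (with $u\in\{a,b\}^*$) is a right special factor of $\mathcal{L}(Z)$ if and only if it is a suffix of $b^kp_kb^k$.
   Context: $\mathcal{L}(Z)$ is the set of finite factors of $\mathbf{z}$ (equivalently of elements of $Z$). A word $w\in\mathcal{L}(Z)$ is right special if both $wa$ and $wb$ belong to $\mathcal{L}(Z)$. *)

theory Defs
  imports Main "HOL-Library.Sublist"
begin

datatype letter = A | B

fun sigma :: "letter \<Rightarrow> letter list" where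
  "sigma A = [A, B, A, B]"
| "sigma B = [B]"

definition sigma_word :: "letter list \<Rightarrow> letter list" where
  "sigma_word w = concat (map sigma w)"

text \<open>The fixed point z = sigma^omega(a): its n-th letter is the n-th letter
  of sigma^(n+1)(a) (which has length > n, and the iterates are prefixes of each other).\<close>
definition z :: "nat \<Rightarrow> letter" where
  "z n = ((sigma_word ^^ Suc n) [A]) ! n"

text \<open>The language L(Z): finite factors of z.\<close>
definition lang :: "letter list set" where
  "lang = {w. \<exists>i. w = map z [i..<i + length w]}"

definition right_special :: "letter list \<Rightarrow> bool" where
  "right_special w \<longleftrightarrow> w @ [A] \<in> lang \<and> w @ [B] \<in> lang"

text \<open>p_1 = a, p_(k+1) = p_k b^k p_k (index 0 is a dummy value).\<close>
fun p :: "nat \<Rightarrow> letter list" where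
  "p 0 = [A]"
| "p (Suc k) = (if k = 0 then [A] else p k @ replicate k B @ p k)"

end

theory Submission
  imports Defs "HOL-Computational_Algebra.Primes"
begin

(* Let v be the 2-adic valuation and P_N = a b^(v 1 + 1) a b^(v 2 + 1) a ... b^(v (N-1) + 1) a.
  If 2^e divides x then v (x + j) = v j for 0 < j < 2^e, so P_(x + 2^e) = P_x b^(v x + 1) P_(2^e);
  hence sigma^n(a) = P_(2^n) b^n, so the P_N are the prefixes of z ending in a, and
  p_(e+1) = P_(2^e).
  An occurrence of u a b^k a (resp. u a b^k b) makes u a a suffix of some P_x with
  v x = k - 1 (resp. of some P_y with v y >= k). Splitting off P_(2^(k-1)), the prefix P_y ends
  in a b^k p_k, while P_x either equals p_k or ends in b^(k+1) p_k; so a common suffix of P_x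
  and P_y is a suffix of b^k p_k. Conversely, b^k p_k b^k a and b^k p_k b^k b both occur in
  P_(2^(k+1)). *)

lemma multiplicity_two_add_small:
  fixes x j :: nat
  assumes "2 ^ e dvd x" "0 < j" "j < 2 ^ e"
  shows "multiplicity 2 (x + j) = multiplicity 2 j"
proof (cases "x = 0")
  case False
  have "\<not> 2 ^ e dvd j" using assms(2,3) by (auto dest: dvd_imp_le)
  then have "multiplicity 2 j < e"
    using assms(2) by (simp add: power_dvd_iff_le_multiplicity not_le)
  also have "e \<le> multiplicity 2 x"
    using assms(1) False by (simp add: power_dvd_iff_le_multiplicity)
  finally show ?thesis
    using multiplicity_sum_lt[of 2 j x] False assms(2) by (simp add: add.commute)
qed simp

lemma multiplicity_two_diff_power_if_less:
  fixes y :: nat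
  assumes "y \<noteq> 0" "e < multiplicity 2 y"
  shows "multiplicity 2 (y - 2 ^ e) = e"
proof -
  have "2 ^ Suc e dvd y" using power_dvd_iff_le_multiplicity[of y 2 "Suc e"] assms by simp
  then obtain t where t: "y = 2 ^ Suc e * t" by blast
  with assms(1) have "0 < t" by simp
  then have "y - 2 ^ e = 2 ^ e * (2 * t - 1)" by (simp add: t algebra_simps)
  moreover have "\<not> 2 dvd (2 * t - 1)" using \<open>0 < t\<close> by presburger
  ultimately show ?thesis by (intro multiplicity_decomposeI) auto
qed

lemma less_multiplicity_two_diff_power:
  fixes x :: nat
  assumes "x \<noteq> 0" "multiplicity 2 x = e" "x \<noteq> 2 ^ e"
  shows "e < multiplicity 2 (x - 2 ^ e)"
proof -
  obtain q where q: "x = 2 ^ e * q" "odd q"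
    using multiplicity_decompose'[of x 2] assms(1,2) by auto
  with assms(3) have "q \<noteq> 1" by auto
  with q(2) have "3 \<le> q" by presburger
  have "even (q - 1)" using q(2) \<open>3 \<le> q\<close> by simp
  then obtain r where r: "q - 1 = 2 * r" by blast
  with \<open>3 \<le> q\<close> have "0 < r" by simp
  have "x - 2 ^ e = 2 ^ e * (q - 1)" by (simp add: q(1) right_diff_distrib')
  also have "\<dots> = 2 ^ Suc e * r" using r by simp
  finally show ?thesis
    using \<open>0 < r\<close> by (simp add: power_dvd_iff_le_multiplicity[symmetric] Suc_le_eq[symmetric])
qed

definition block :: "nat \<Rightarrow> letter list" where
  "block n = replicate (Suc (multiplicity 2 n)) B @ [A]"

(* P_N in the notation above; z_prefix 0 = z_prefix 1 = [A]. *)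
definition z_prefix :: "nat \<Rightarrow> letter list" where
  "z_prefix N = A # concat (map block [1..<N])"

lemma z_prefix_add:
  "0 < x \<Longrightarrow> z_prefix (x + d) = z_prefix x @ concat (map block [x..<x + d])"
  using upt_add_eq_append[of 1 x d] by (simp add: z_prefix_def)

lemma z_prefix_Suc: "0 < N \<Longrightarrow> z_prefix (Suc N) = z_prefix N @ block N"
  by (simp add: z_prefix_def)

lemma z_prefix_mono: "M \<le> N \<Longrightarrow> prefix (z_prefix M) (z_prefix N)"
proof (cases "M = 0")
  case False
  assume "M \<le> N"
  then obtain d where "N = M + d" using le_Suc_ex by blast
  with False show ?thesis by (simp add: z_prefix_add)
qed (simp add: z_prefix_def)

lemma z_prefix_snoc_A: "\<exists>t. z_prefix N = t @ [A]"
proof (cases "N \<le> 1")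
  case True
  then show ?thesis by (simp add: z_prefix_def)
next
  case False
  then obtain M where "N = Suc M" "0 < M" by (cases N) auto
  then show ?thesis by (simp add: z_prefix_Suc block_def)
qed

lemma length_z_prefix_ge: "N \<le> length (z_prefix N)"
proof (induction N)
  case (Suc N)
  then show ?case by (cases "N = 0") (simp_all add: z_prefix_Suc block_def z_prefix_def)
qed simp

lemma z_prefix_add_power:
  assumes "2 ^ e dvd x" "0 < x"
  shows "z_prefix (x + 2 ^ e) =
    z_prefix x @ replicate (Suc (multiplicity 2 x)) B @ z_prefix (2 ^ e)"
proof -
  have "map block [Suc x..<x + 2 ^ e] = map block [1..<2 ^ e]"
  proof (rule nth_equalityI)
    fix i assume "i < length (map block [Suc x..<x + 2 ^ e])"
    then have "Suc i < 2 ^ e" by simp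
    then show "map block [Suc x..<x + 2 ^ e] ! i = map block [1..<2 ^ e] ! i"
      using multiplicity_two_add_small[OF assms(1), of "Suc i"] by (simp add: block_def)
  qed simp
  moreover have "[x..<x + 2 ^ e] = x # [Suc x..<x + 2 ^ e]" by (simp add: upt_conv_Cons)
  ultimately have "concat (map block [x..<x + 2 ^ e]) =
      replicate (Suc (multiplicity 2 x)) B @ z_prefix (2 ^ e)"
    by (simp add: block_def z_prefix_def)
  then show ?thesis by (simp add: z_prefix_add assms(2))
qed

lemma z_prefix_double:
  "z_prefix (2 ^ Suc e) = z_prefix (2 ^ e) @ replicate (Suc e) B @ z_prefix (2 ^ e)"
  using z_prefix_add_power[of e "2 ^ e"] by (simp add: mult_2)

lemma p_eq_z_prefix: "p (Suc e) = z_prefix (2 ^ e)"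
proof (induction e)
  case 0
  then show ?case by (simp add: z_prefix_def)
next
  case (Suc e)
  then show ?case using z_prefix_double[of e] by simp
qed

lemma sigma_word_power_append:
  "(sigma_word ^^ n) (x @ y) = (sigma_word ^^ n) x @ (sigma_word ^^ n) y"
  by (induction n) (simp_all add: sigma_word_def)

lemma sigma_word_power_B: "(sigma_word ^^ n) [B] = [B]"
  by (induction n) (simp_all add: sigma_word_def)

lemma sigma_word_power_A: "(sigma_word ^^ n) [A] = z_prefix (2 ^ n) @ replicate n B"
proof (induction n)
  case (Suc n)
  have "(sigma_word ^^ Suc n) [A] = (sigma_word ^^ n) ([A] @ [B] @ [A] @ [B])"
    by (simp add: funpow_Suc_right sigma_word_def del: funpow.simps)
  also have "\<dots> = z_prefix (2 ^ Suc n) @ replicate (Suc n) B"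
    by (simp only: sigma_word_power_append sigma_word_power_B Suc z_prefix_double)
       (simp add: replicate_append_same[symmetric])
  finally show ?case .
qed (simp add: z_prefix_def)

lemma nth_prefix: "prefix xs ys \<Longrightarrow> i < length xs \<Longrightarrow> ys ! i = xs ! i"
  by (auto simp: prefix_def nth_append)

lemma z_prefix_nth:
  assumes "i < length (z_prefix M)" "i < length (z_prefix N)"
  shows "z_prefix M ! i = z_prefix N ! i"
proof (cases "M \<le> N")
  case True
  show ?thesis using nth_prefix[OF z_prefix_mono[OF True] assms(1)] by simp
next
  case False
  then have "N \<le> M" by simp
  show ?thesis using nth_prefix[OF z_prefix_mono[OF \<open>N \<le> M\<close>] assms(2)] by simp
qed

lemma z_eq_z_prefix_nth: "i < length (z_prefix N) \<Longrightarrow> z i = z_prefix N ! i"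
proof -
  assume i: "i < length (z_prefix N)"
  have i': "i < length (z_prefix (2 ^ Suc i))"
    using less_exp[of "Suc i"] length_z_prefix_ge[of "2 ^ Suc i"] by linarith
  have "z i = (z_prefix (2 ^ Suc i) @ replicate (Suc i) B) ! i"
    unfolding z_def sigma_word_power_A ..
  also have "\<dots> = z_prefix (2 ^ Suc i) ! i" using i' by (simp add: nth_append)
  also have "\<dots> = z_prefix N ! i" using i' i by (rule z_prefix_nth)
  finally show ?thesis .
qed

lemma lang_iff_sublist_z_prefix: "w \<in> lang \<longleftrightarrow> (\<exists>N. sublist w (z_prefix N))"
proof
  assume "w \<in> lang"
  then obtain i where w: "w = map z [i..<i + length w]" by (auto simp: lang_def)
  define N where "N = Suc (i + length w)"
  have len: "i + length w < length (z_prefix N)"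
    using length_z_prefix_ge[of N] by (simp add: N_def)
  have "w = take (length w) (drop i (z_prefix N))"
  proof (rule nth_equalityI)
    fix j assume "j < length w"
    then show "w ! j = take (length w) (drop i (z_prefix N)) ! j"
      using len z_eq_z_prefix_nth[of "i + j" N] by (subst w) simp
  qed (use len in simp)
  then show "\<exists>N. sublist w (z_prefix N)"
    by (metis sublist_drop sublist_order.dual_order.trans sublist_take)
next
  assume "\<exists>N. sublist w (z_prefix N)"
  then obtain N ps ss where N: "z_prefix N = ps @ w @ ss" by (auto simp: sublist_def)
  have "w = map z [length ps..<length ps + length w]"
  proof (rule nth_equalityI)
    fix j assume "j < length w"
    then show "w ! j = map z [length ps..<length ps + length w] ! j"
      using z_eq_z_prefix_nth[of "length ps + j" N] N by (simp add: nth_append)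
  qed simp
  then show "w \<in> lang" unfolding lang_def by blast
qed

lemma prefix_snoc_A_replicate_B:
  "prefix (t @ [A]) (replicate n B @ [A]) \<Longrightarrow> t = replicate n B"
proof (induction n arbitrary: t)
  case 0
  then show ?case by (cases t) auto
next
  case (Suc n)
  then show ?case by (cases t) auto
qed

lemma prefix_z_prefix_snoc_A:
  "prefix (t @ [A]) (z_prefix N) \<Longrightarrow> \<exists>x>0. t @ [A] = z_prefix x"
proof (induction N arbitrary: t)
  case 0
  then have "t @ [A] = z_prefix 1" by (cases t) (auto simp: z_prefix_def)
  then show ?case by blast
next
  case (Suc N)
  show ?case
  proof (cases "N = 0")
    case True
    then have "t @ [A] = z_prefix 1" using Suc.prems by (cases t) (auto simp: z_prefix_def)
    then show ?thesis by blast
  next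
    case False
    then have N: "z_prefix (Suc N) = z_prefix N @ block N" by (simp add: z_prefix_Suc)
    from Suc.prems[unfolded N prefix_append] show ?thesis
    proof
      assume "prefix (t @ [A]) (z_prefix N)"
      then show ?thesis using Suc.IH by blast
    next
      assume "\<exists>us. t @ [A] = z_prefix N @ us \<and> prefix us (block N)"
      then obtain us where us: "t @ [A] = z_prefix N @ us" "prefix us (block N)" by blast
      show ?thesis
      proof (cases us rule: rev_cases)
        case Nil
        then show ?thesis using us False by auto
      next
        case (snoc us' a)
        with us(1) have "a = A" by simp
        with snoc us(2) have "us' = replicate (Suc (multiplicity 2 N)) B"
          unfolding block_def by (blast dest: prefix_snoc_A_replicate_B)
        with snoc \<open>a = A\<close> have "us = block N" by (simp only: block_def)
        then show ?thesis using us N by (intro exI[of _ "Suc N"]) simp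
      qed
    qed
  qed
qed

lemma replicate_B_Cons_A_eq:
  "replicate m B @ A # r = replicate k B @ c # r' \<Longrightarrow> c = A \<and> k = m \<or> c = B \<and> k < m"
proof (induction m arbitrary: k)
  case 0
  then show ?case by (cases k) auto
next
  case (Suc m)
  then show ?case by (cases k) auto
qed

lemma sublist_z_prefix_B_run:
  assumes "sublist (t @ [A] @ replicate k B @ [c]) (z_prefix N)"
  obtains x where "0 < x" "suffix (t @ [A]) (z_prefix x)"
    "c = A \<and> k = Suc (multiplicity 2 x) \<or> c = B \<and> k < Suc (multiplicity 2 x)"
proof -
  obtain ps ss where "z_prefix N = ((ps @ t) @ [A]) @ replicate k B @ c # ss"
    using assms unfolding sublist_def by auto
  moreover from this have "prefix ((ps @ t) @ [A]) (z_prefix N)" by (rule prefixI)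
  then obtain x where x: "0 < x" "(ps @ t) @ [A] = z_prefix x"
    using prefix_z_prefix_snoc_A by blast
  ultimately have N: "z_prefix N = z_prefix x @ replicate k B @ c # ss" by simp
  have "x < N"
  proof (rule ccontr)
    assume "\<not> x < N"
    then have "length (z_prefix N) \<le> length (z_prefix x)"
      by (simp add: prefix_length_le z_prefix_mono)
    with N show False by simp
  qed
  then have "prefix (z_prefix x @ block x) (z_prefix N)"
    using z_prefix_mono[of "Suc x" N] by (simp add: z_prefix_Suc x(1))
  with N obtain r where "replicate (Suc (multiplicity 2 x)) B @ A # r = replicate k B @ c # ss"
    by (auto simp: prefix_def block_def)
  then have "c = A \<and> k = Suc (multiplicity 2 x) \<or> c = B \<and> k < Suc (multiplicity 2 x)"
    by (rule replicate_B_Cons_A_eq)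
  moreover have "z_prefix x = ps @ t @ [A]" using x(2) by simp
  then have "suffix (t @ [A]) (z_prefix x)" by (rule suffixI)
  ultimately show ?thesis using that x(1) by blast
qed

lemma suffix_z_prefix_high_multiplicity:
  assumes "0 < y" "e < multiplicity 2 y"
  shows "suffix (A # replicate (Suc e) B @ z_prefix (2 ^ e)) (z_prefix y)"
proof -
  define x where "x = y - 2 ^ e"
  have "2 ^ Suc e dvd y"
    using power_dvd_iff_le_multiplicity[of y 2 "Suc e"] assms by simp
  then have "2 ^ Suc e \<le> y" using assms(1) by (rule dvd_imp_le)
  moreover have "(2::nat) ^ e < 2 ^ Suc e" by simp
  ultimately have "2 ^ e < y" by linarith
  then have y: "y = x + 2 ^ e" and "0 < x" by (simp_all add: x_def)
  have "2 ^ e dvd x"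
    using \<open>2 ^ Suc e dvd y\<close> by (simp add: x_def dvd_diff_nat dvd_mult_right)
  moreover have "multiplicity 2 x = e"
    unfolding x_def using assms by (intro multiplicity_two_diff_power_if_less) simp_all
  moreover obtain t where "z_prefix x = t @ [A]" using z_prefix_snoc_A by blast
  ultimately show ?thesis
    using z_prefix_add_power[of e x] \<open>0 < x\<close> by (simp add: y suffix_def)
qed

lemma suffix_z_prefix_exact_multiplicity:
  assumes "0 < x" "multiplicity 2 x = e" "x \<noteq> 2 ^ e"
  shows "suffix (B # replicate (Suc e) B @ z_prefix (2 ^ e)) (z_prefix x)"
proof -
  define x' where "x' = x - 2 ^ e"
  have "2 ^ e dvd x" using assms(2) multiplicity_dvd[of 2 x] by simp
  then have "2 ^ e \<le> x" using assms(1) by (rule dvd_imp_le)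
  with assms(3) have x: "x = x' + 2 ^ e" and "0 < x'" by (simp_all add: x'_def)
  have "e < multiplicity 2 x'"
    unfolding x'_def using assms by (intro less_multiplicity_two_diff_power) simp_all
  then have "replicate (Suc (multiplicity 2 x')) B =
      replicate (multiplicity 2 x' - Suc e) B @ B # replicate (Suc e) B"
    by (simp flip: replicate_add replicate_Suc)
  moreover have "2 ^ e dvd x'" using \<open>2 ^ e dvd x\<close> by (simp add: x'_def)
  ultimately show ?thesis
    using z_prefix_add_power[of e x'] \<open>0 < x'\<close> by (simp add: x suffix_def)
qed

lemma suffix_of_diverging_suffixes:
  assumes "suffix s xs" "suffix s ys" "suffix (a # w) xs" "suffix (b # w) ys" "a \<noteq> b"
  shows "suffix s w"
proof -
  have "\<not> suffix (c # w) w" for c :: 'a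
    using suffix_length_le by fastforce
  then have incomparable: "\<not> suffix (a # w) (b # w)" "\<not> suffix (b # w) (a # w)"
    using assms(5) by (auto simp: suffix_Cons)
  have "suffix s (a # w) \<or> suffix (a # w) s"
    using assms(1,3) by (rule suffix_same_cases)
  moreover have "suffix s (b # w) \<or> suffix (b # w) s"
    using assms(2,4) by (rule suffix_same_cases)
  ultimately have "suffix s (a # w) \<and> suffix s (b # w)"
    using incomparable suffix_same_cases suffix_order.trans by metis
  then show ?thesis
    using incomparable by (auto simp: suffix_Cons)
qed

lemma common_suffix_z_prefixes:
  assumes "0 < x" "multiplicity 2 x = e" "0 < y" "e < multiplicity 2 y"
    and "suffix s (z_prefix x)" "suffix s (z_prefix y)"
  shows "suffix s (replicate (Suc e) B @ z_prefix (2 ^ e))"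
proof (cases "x = 2 ^ e")
  case True
  then show ?thesis using assms(5) by (metis suffix_appendI)
next
  case False
  show ?thesis
    using suffix_of_diverging_suffixes[OF assms(5,6)
        suffix_z_prefix_exact_multiplicity[OF assms(1,2) False]
        suffix_z_prefix_high_multiplicity[OF assms(3,4)]]
    by simp
qed

lemma sublist_z_prefix_extension:
  "sublist (replicate (Suc e) B @ z_prefix (2 ^ e) @ replicate (Suc e) B @ [c])
     (z_prefix (2 ^ Suc (Suc e)))"
proof -
  define P where "P = z_prefix (2 ^ e)"
  define R where "R = replicate (Suc e) B"
  have Z: "z_prefix (2 ^ Suc (Suc e)) = P @ R @ P @ B # R @ P @ R @ P"
    using z_prefix_double[of "Suc e"] z_prefix_double[of e] by (simp add: P_def R_def)
  obtain T where "P = A # T" by (simp add: P_def z_prefix_def)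
  moreover have "B # R = R @ [B]" by (simp add: R_def replicate_append_same)
  ultimately have ZA: "z_prefix (2 ^ Suc (Suc e)) = (P @ R @ P @ [B]) @ (R @ P @ R @ [A]) @ T"
    and ZB: "z_prefix (2 ^ Suc (Suc e)) = P @ (R @ P @ R @ [B]) @ (P @ R @ P)"
    unfolding Z by simp_all
  show ?thesis
    unfolding P_def[symmetric] R_def[symmetric]
    by (cases c) (simp only: ZA sublist_appendI, simp only: ZB sublist_appendI)
qed

lemma right_special_imp_suffix:
  assumes "0 < k" "right_special (u @ [A] @ replicate k B)"
  shows "suffix (u @ [A]) (replicate k B @ p k)"
proof -
  obtain e where k: "k = Suc e" using assms(1) by (cases k) auto
  obtain N N' where NA: "sublist (u @ [A] @ replicate k B @ [A]) (z_prefix N)"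
      and NB: "sublist (u @ [A] @ replicate k B @ [B]) (z_prefix N')"
    using assms(2) unfolding right_special_def lang_iff_sublist_z_prefix by auto
  obtain x where "0 < x" "suffix (u @ [A]) (z_prefix x)" "k = Suc (multiplicity 2 x)"
    using sublist_z_prefix_B_run[OF NA] by auto
  moreover obtain y where "0 < y" "suffix (u @ [A]) (z_prefix y)" "k < Suc (multiplicity 2 y)"
    using sublist_z_prefix_B_run[OF NB] by auto
  ultimately show ?thesis
    unfolding k p_eq_z_prefix using common_suffix_z_prefixes[of x e y "u @ [A]"] k by simp
qed

lemma suffix_imp_right_special:
  assumes "0 < k" "suffix (u @ [A]) (replicate k B @ p k)"
  shows "right_special (u @ [A] @ replicate k B)"
proof -
  obtain e where k: "k = Suc e" using assms(1) by (cases k) auto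
  let ?W = "replicate k B @ p k"
  have "suffix (u @ [A] @ replicate k B @ [c]) (?W @ replicate k B @ [c])" for c
    using assms(2) same_suffix_suffix[of "u @ [A]" "replicate k B @ [c]" ?W] by simp
  moreover have "sublist (?W @ replicate k B @ [c]) (z_prefix (2 ^ Suc k))" for c
    using sublist_z_prefix_extension[of e c] by (simp only: k p_eq_z_prefix append_assoc)
  ultimately have "sublist (u @ [A] @ replicate k B @ [c]) (z_prefix (2 ^ Suc k))" for c
    by (meson suffix_imp_sublist sublist_order.order_trans)
  then show ?thesis
    unfolding right_special_def lang_iff_sublist_z_prefix append_assoc by blast
qed

theorem mainTheorem8:
  fixes k :: nat and u :: "letter list"
  assumes "k \<ge> 1"
  shows "right_special (u @ [A] @ replicate k B) \<longleftrightarrow>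
         suffix (u @ [A] @ replicate k B) (replicate k B @ p k @ replicate k B)"
proof -
  have "suffix (u @ [A] @ replicate k B) (replicate k B @ p k @ replicate k B) \<longleftrightarrow>
      suffix (u @ [A]) (replicate k B @ p k)"
    unfolding append_assoc[symmetric] by (rule same_suffix_suffix)
  moreover have "0 < k" using assms by simp
  ultimately show ?thesis using right_special_imp_suffix suffix_imp_right_special by blast
qed

end
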